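(* Let $L\subseteq\mathbb{Z}^n$ be a lattice, let $L_{\mathbb{R}}$ carry an $L$-equivariant cell complex structure, and let $\psi\colon L_{\mathbb{R}}\to\mathbb{Z}^n$ be a compatible $\mathbb{Z}^n$-stratification. The cellular free $S$-complex $F_\psi$ is minimal if and only if, for every $\bm u\in\mathbb{Z}^n$, each connected component of the preimage $\psi^{-1}(\bm u)$ consists of a single open cell.
   Context: Let $n\ge1$, $L\subseteq\mathbb{Z}^n$ a subgroup, $L_{\mathbb{R}}=L\otimes\mathbb{R}\subseteq\mathbb{R}^n$. A cell complex (CW) structure on $L_{\mathbb{R}}$ is $L$-equivariant if translates of open cells by $\bm v\in L$ are open cells. Give $\mathbb{Z}^n$ the componentwise order and Alexandrov topology (open = up-closed). A compatible $\mathbb{Z}^n$-stratification is a continuous $\psi\colon L_{\mathbb{R}}\to\mathbb{Z}^n$, constant on open cells, with $\psi(\bm p+\bm v)=\psi(\bm p)+\bm v$ for $\bm v\in L$; $\psi(\sigma)$ is its value on the cell $\sigma$. $\Bbbk$ is a field, $S=\Bbbk[x_1,\dots,x_n]$ with $\deg\bm x^{\bm u}=\bm u$. With $L$-invariant orientations and cellular incidence numbers $\varepsilon(\sigma,\tau)$ (zero unless $\dim\sigma=\dim\tau+1$ and $\tau\subseteq\overline\sigma$), $F_\psi$ is the complex with $(F_\psi)_i=\bigoplus_{\dim\sigma=i}S\,\sigma$, $S\,\sigma\cong S(-\psi(\sigma))$, and $\partial\sigma=\sum_\tau\varepsilon(\sigma,\tau)\bm x^{\psi(\sigma)-\psi(\tau)}\tau$.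 A free complex is minimal if no entry of its differential matrices is a nonzero scalar (unit). *)

theory Defs
  imports "HOL-Analysis.Analysis" "HOL-Library.Poly_Mapping"
begin

text \<open>Points of Z^n are vectors int^'n, points of R^n are vectors real^'n
  (the dimension n = CARD('n) is arbitrary, n >= 1 automatically).\<close>

definition zle :: "int^'n \<Rightarrow> int^'n \<Rightarrow> bool" where
  "zle u v \<longleftrightarrow> (\<forall>i. u$i \<le> v$i)"

definition rvec :: "int^'n \<Rightarrow> real^'n" where
  "rvec v = (\<chi> i. real_of_int (v$i))"

definition is_subgroup_Zn :: "(int^'n) set \<Rightarrow> bool" where
  "is_subgroup_Zn L \<longleftrightarrow> 0 \<in> L \<and> (\<forall>u\<in>L. \<forall>v\<in>L. u + v \<in> L \<and> - u \<in> L)"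

definition LR :: "(int^'n) set \<Rightarrow> (real^'n) set" where
  "LR L = span (rvec ` L)"

text \<open>Each closed cell is the homeomorphic image of a closed
  d-ball (taken inside a d-dimensional linear subspace of real^'n), the open cell
  being the image of the open ball; cells are nonempty, pairwise disjoint and cover X;
  closure-finiteness (C) and the weak topology (W) hold.\<close>

definition cell_of_dim :: "(real^'n) set \<Rightarrow> nat \<Rightarrow> bool" where
  "cell_of_dim \<sigma> d \<longleftrightarrow>
     (\<exists>V::(real^'n) set. \<exists>h. subspace V \<and> dim V = d \<and>
        homeomorphism (cball 0 1 \<inter> V) (closure \<sigma>) h (inv_into (cball 0 1 \<inter> V) h) \<and>
        h ` (ball 0 1 \<inter> V) = \<sigma>)"

definition cell_complex :: "(real^'n) set \<Rightarrow> (real^'n) set set \<Rightarrow> ((real^'n) set \<Rightarrow> nat) \<Rightarrow> bool" where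
  "cell_complex X C cdim \<longleftrightarrow>
     (\<forall>\<sigma>\<in>C. \<sigma> \<noteq> {} \<and> cell_of_dim \<sigma> (cdim \<sigma>)) \<and>
     (\<forall>\<sigma>\<in>C. \<forall>\<tau>\<in>C. \<sigma> \<noteq> \<tau> \<longrightarrow> \<sigma> \<inter> \<tau> = {}) \<and>
     \<Union>C = X \<and>
     (\<forall>\<sigma>\<in>C. closure \<sigma> - \<sigma> \<subseteq> \<Union>{\<tau>\<in>C. cdim \<tau> < cdim \<sigma>}) \<and>
     (\<forall>\<sigma>\<in>C. finite {\<tau>\<in>C. \<tau> \<inter> closure \<sigma> \<noteq> {}}) \<and>
     (\<forall>A. A \<subseteq> X \<longrightarrow>
        (closedin (top_of_set X) A \<longleftrightarrow> (\<forall>\<sigma>\<in>C. closedin (top_of_set (closure \<sigma>)) (A \<inter> closure \<sigma>))))"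

definition equivariant_cc :: "(int^'n) set \<Rightarrow> (real^'n) set set \<Rightarrow> ((real^'n) set \<Rightarrow> nat) \<Rightarrow> bool" where
  "equivariant_cc L C cdim \<longleftrightarrow>
     (\<forall>\<sigma>\<in>C. \<forall>v\<in>L. (\<lambda>p. p + rvec v) ` \<sigma> \<in> C \<and> cdim ((\<lambda>p. p + rvec v) ` \<sigma>) = cdim \<sigma>)"

definition facet :: "((real^'n) set \<Rightarrow> nat) \<Rightarrow> (real^'n) set \<Rightarrow> (real^'n) set \<Rightarrow> bool" where
  "facet cdim \<sigma> \<tau> \<longleftrightarrow> \<tau> \<subseteq> closure \<sigma> \<and> cdim \<sigma> = cdim \<tau> + 1"

definition incidence_function ::
  "(int^'n) set \<Rightarrow> (real^'n) set set \<Rightarrow> ((real^'n) set \<Rightarrow> nat) \<Rightarrow>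
   ((real^'n) set \<Rightarrow> (real^'n) set \<Rightarrow> int) \<Rightarrow> bool" where
  "incidence_function L C cdim \<epsilon> \<longleftrightarrow>
     (\<forall>\<sigma>\<in>C. \<forall>\<tau>\<in>C. (facet cdim \<sigma> \<tau> \<longrightarrow> \<epsilon> \<sigma> \<tau> \<in> {1, -1}) \<and>
                    (\<not> facet cdim \<sigma> \<tau> \<longrightarrow> \<epsilon> \<sigma> \<tau> = 0)) \<and>
     (\<forall>\<sigma>\<in>C. \<forall>\<rho>\<in>C. (\<Sum>\<tau>\<in>{\<tau>\<in>C. \<epsilon> \<sigma> \<tau> \<noteq> 0}. \<epsilon> \<sigma> \<tau> * \<epsilon> \<tau> \<rho>) = 0) \<and>
     (\<forall>e\<in>C. cdim e = 1 \<longrightarrow> (\<Sum>v\<in>{v\<in>C. \<epsilon> e v \<noteq> 0}. \<epsilon> e v) = 0) \<and>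
     (\<forall>\<sigma>\<in>C. \<forall>\<tau>\<in>C. \<forall>v\<in>L.
        \<epsilon> ((\<lambda>p. p + rvec v) ` \<sigma>) ((\<lambda>p. p + rvec v) ` \<tau>) = \<epsilon> \<sigma> \<tau>)"

text \<open>Continuity for the Alexandrov topology on Z^n (open = up-closed).\<close>

definition up_closed :: "(int^'n) set \<Rightarrow> bool" where
  "up_closed U \<longleftrightarrow> (\<forall>u\<in>U. \<forall>v. zle u v \<longrightarrow> v \<in> U)"

definition stratification ::
  "(int^'n) set \<Rightarrow> (real^'n) set set \<Rightarrow> (real^'n \<Rightarrow> int^'n) \<Rightarrow> bool" where
  "stratification L C \<psi> \<longleftrightarrow>
     (\<forall>U. up_closed U \<longrightarrow> openin (top_of_set (LR L)) {p \<in> LR L. \<psi> p \<in> U}) \<and>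
     (\<forall>\<sigma>\<in>C. \<forall>p\<in>\<sigma>. \<forall>q\<in>\<sigma>. \<psi> p = \<psi> q) \<and>
     (\<forall>p\<in>LR L. \<forall>v\<in>L. \<psi> (p + rvec v) = \<psi> p + v)"

definition cval :: "(real^'n \<Rightarrow> int^'n) \<Rightarrow> (real^'n) set \<Rightarrow> int^'n" where
  "cval \<psi> \<sigma> = \<psi> (SOME p. p \<in> \<sigma>)"

text \<open>S = k[x_1..x_n] is represented as finitely supported maps from exponent
  vectors ('n => nat) to k; x^e is single e 1.\<close>

definition monexp :: "int^'n \<Rightarrow> (nat^'n)" where
  "monexp v = (\<chi> i. nat (v$i))"

definition Fpsi_entry ::
  "(real^'n \<Rightarrow> int^'n) \<Rightarrow> ((real^'n) set \<Rightarrow> (real^'n) set \<Rightarrow> int) \<Rightarrow>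
   (real^'n) set \<Rightarrow> (real^'n) set \<Rightarrow> (nat^'n) \<Rightarrow>\<^sub>0 'k::field" where
  "Fpsi_entry \<psi> \<epsilon> \<sigma> \<tau> = Poly_Mapping.single (monexp (cval \<psi> \<sigma> - cval \<psi> \<tau>)) (of_int (\<epsilon> \<sigma> \<tau>))"

definition nonzero_scalar :: "((nat^'n) \<Rightarrow>\<^sub>0 'k::field) \<Rightarrow> bool" where
  "nonzero_scalar f \<longleftrightarrow> (\<exists>c. c \<noteq> 0 \<and> f = Poly_Mapping.single 0 c)"

definition Fpsi_minimal ::
  "'k::field itself \<Rightarrow> (real^'n) set set \<Rightarrow> ((real^'n) set \<Rightarrow> nat) \<Rightarrow>
   (real^'n \<Rightarrow> int^'n) \<Rightarrow> ((real^'n) set \<Rightarrow> (real^'n) set \<Rightarrow> int) \<Rightarrow> bool" where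
  "Fpsi_minimal TYPE('k) C cdim \<psi> \<epsilon> \<longleftrightarrow>
     (\<forall>\<sigma>\<in>C. \<forall>\<tau>\<in>C. cdim \<sigma> = cdim \<tau> + 1 \<longrightarrow>
        \<not> nonzero_scalar (Fpsi_entry \<psi> \<epsilon> \<sigma> \<tau> :: (nat^'n) \<Rightarrow>\<^sub>0 'k))"

end

theory Submission
  imports Defs
begin

(* An entry of the differential of F_psi is a unit exactly when it belongs to a facet tau of
   sigma with psi(tau) = psi(sigma); such a pair makes sigma Un tau a connected subset of a fibre
   of psi that is not a single cell. Conversely, psi increases along closures (this is continuity
   for the Alexandrov topology), so a fibre containing a cell that meets the closure of another
   contains a facet pair: in a regular cell complex such a face relation can be refined until it
   has codimension one, by invariance of domain and of dimension applied to the attaching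
   spheres. Without facet pairs every cell is open and closed in its fibre, the weak topology
   giving openness, hence a component. *)

section \<open>Invariance of domain for patches of spheres\<close>

lemma aff_dim_cball_Int_subspace:
  fixes V :: "'a::euclidean_space set"
  assumes "subspace V"
  shows "aff_dim (cball 0 1 \<inter> V) = dim V"
proof -
  have "V \<inter> interior (cball 0 1) \<noteq> {}"
    using subspace_0[OF assms] by auto
  then have "aff_dim (V \<inter> cball 0 1) = aff_dim V"
    using aff_dim_convex_Int_nonempty_interior subspace_imp_convex[OF assms] by blast
  then show ?thesis
    using aff_dim_subspace[OF assms] by (simp add: Int_commute)
qed

lemma rel_frontier_cball_Int_subspace:
  fixes V :: "'a::euclidean_space set"
  assumes "subspace V"
  shows "rel_frontier (cball 0 1 \<inter> V) = sphere 0 1 \<inter> V"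
proof -
  have "0 \<in> interior (cball 0 1) \<inter> V"
    using subspace_0[OF assms] by simp
  then have "rel_frontier (cball 0 1 \<inter> V) = frontier (cball 0 1) \<inter> V"
    by (intro convex_affine_rel_frontier_Int convex_cball subspace_imp_affine[OF assms]) blast
  then show ?thesis
    by simp
qed

lemma openin_image_sphere_patch:
  fixes f :: "'a::euclidean_space \<Rightarrow> 'b::euclidean_space"
  assumes V: "subspace V" and W: "subspace W" and dim: "dim W < dim V"
    and S: "openin (top_of_set (sphere 0 1 \<inter> V)) S"
    and f: "continuous_on S f" "inj_on f S" "f ` S \<subseteq> W"
  shows "openin (top_of_set W) (f ` S)"
proof (rule invariance_of_domain_sphere_affine_set_gen[OF f(1,2)])
  show "f \<in> S \<rightarrow> W" using f(3) by blast
  show "bounded (cball 0 1 \<inter> V)" by (simp add: bounded_Int)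
  show "convex (cball 0 1 \<inter> V)" using V by (simp add: convex_Int subspace_imp_convex)
  show "affine W" using W by (rule subspace_imp_affine)
  show "aff_dim W < aff_dim (cball 0 1 \<inter> V)"
    using dim by (simp add: aff_dim_cball_Int_subspace[OF V] aff_dim_subspace[OF W])
  show "openin (top_of_set (rel_frontier (cball 0 1 \<inter> V))) S"
    using S by (simp add: rel_frontier_cball_Int_subspace[OF V])
qed

text \<open>Removing the antipode of a point of the patch leaves a nonempty patch of a punctured
  sphere, which is homeomorphic to a subspace of one dimension less.\<close>

lemma sphere_patch_chart:
  fixes V :: "'a::euclidean_space set"
  assumes V: "subspace V" and S: "openin (top_of_set (sphere 0 1 \<inter> V)) S" "s \<in> S"
  obtains T :: "'a set" and S' \<phi> \<phi>' where "subspace T" "dim V = dim T + 1" "S' \<subseteq> S" "S' \<noteq> {}"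
    "openin (top_of_set T) (\<phi> ` S')" "homeomorphism S' (\<phi> ` S') \<phi> \<phi>'"
proof -
  let ?B = "cball 0 1 \<inter> V"
  have s: "s \<in> sphere 0 1 \<inter> V"
    using openin_imp_subset[OF S(1)] S(2) by blast
  then have "dim V \<ge> 1"
    by (metis dim_eq_0 less_one not_le norm_zero singletonD subsetD zero_neq_one IntE mem_sphere_0)
  obtain T :: "'a set" where T: "subspace T" "dim T = dim V - 1"
    using choose_subspace_of_subspace[of "dim V - 1" V] by auto
  have "- s \<in> rel_frontier ?B"
    using s V by (simp add: rel_frontier_cball_Int_subspace subspace_neg)
  moreover have "aff_dim ?B = aff_dim T + 1"
    using \<open>dim V \<ge> 1\<close> T by (simp add: aff_dim_cball_Int_subspace[OF V] aff_dim_subspace)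
  ultimately have "rel_frontier ?B - {- s} homeomorphic T"
    using V T(1) by (intro homeomorphic_punctured_sphere_affine_gen)
      (auto simp: bounded_Int convex_Int subspace_imp_convex subspace_imp_affine)
  then obtain \<phi> \<phi>' where \<phi>: "homeomorphism (rel_frontier ?B - {- s}) T \<phi> \<phi>'"
    by (auto simp: homeomorphic_def)
  have S'_open: "openin (top_of_set (rel_frontier ?B - {- s})) (S - {- s})"
    using S(1) by (auto simp: rel_frontier_cball_Int_subspace[OF V] openin_open)
  have "s \<noteq> - s"
    using s by (metis IntD1 mem_sphere_0 eq_neg_iff_add_eq_0 norm_zero scaleR_2 scaleR_eq_0_iff
        zero_neq_numeral zero_neq_one)
  show ?thesis
  proof (rule that[OF T(1) _ _ _ homeomorphism_imp_open_map[OF \<phi> S'_open]])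
    show "homeomorphism (S - {- s}) (\<phi> ` (S - {- s})) \<phi> \<phi>'"
      using \<phi> openin_imp_subset[OF S'_open] homeomorphism_of_subsets
      by (metis homeomorphism_image1 image_mono)
  qed (use T \<open>dim V \<ge> 1\<close> S(2) \<open>s \<noteq> - s\<close> in auto)
qed

lemma dim_le_if_sphere_patch_embeds:
  fixes f :: "'a::euclidean_space \<Rightarrow> 'b::euclidean_space"
  assumes V: "subspace V" and W: "subspace W"
    and S: "openin (top_of_set (sphere 0 1 \<inter> V)) S" "s \<in> S"
    and f: "continuous_on S f" "inj_on f S" "f ` S \<subseteq> W"
  shows "dim V \<le> dim W + 1"
proof -
  obtain T :: "'a set" and S' \<phi> \<phi>' where T: "subspace T" "dim V = dim T + 1"
    and S': "S' \<subseteq> S" "S' \<noteq> {}" "openin (top_of_set T) (\<phi> ` S')"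
    and \<phi>: "homeomorphism S' (\<phi> ` S') \<phi> \<phi>'"
    using V S by (rule sphere_patch_chart)
  have \<phi>': "homeomorphism (\<phi> ` S') S' \<phi>' \<phi>"
    using \<phi> by (rule homeomorphism_symD)
  have "continuous_on (\<phi> ` S') (f \<circ> \<phi>')"
    using continuous_on_subset[OF f(1) S'(1)] homeomorphism_image1[OF \<phi>']
    by (intro continuous_on_compose homeomorphism_cont1[OF \<phi>']) simp
  moreover have "inj_on (f \<circ> \<phi>') (\<phi> ` S')"
    using inj_on_subset[OF f(2) S'(1)] homeomorphism_image1[OF \<phi>'] homeomorphism_apply1[OF \<phi>']
    by (intro comp_inj_on) (auto intro: inj_on_inverseI)
  moreover have "(f \<circ> \<phi>') ` \<phi> ` S' \<subseteq> W"
    using homeomorphism_image1[OF \<phi>'] S'(1) f(3) by (auto simp: image_comp[symmetric])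
  ultimately have "aff_dim T \<le> aff_dim W"
    using invariance_of_dimension_affine_sets[OF S'(3), of W "f \<circ> \<phi>'"] T(1) W S'(2)
    by (simp add: subspace_imp_affine image_subset_iff_funcset comp_def)
  then show ?thesis
    using T by (simp add: aff_dim_subspace[OF T(1)] aff_dim_subspace[OF W])
qed

section \<open>Regular cells and cell complexes\<close>

lemma cell_of_dimE:
  fixes \<sigma> :: "(real^'n) set"
  assumes "cell_of_dim \<sigma> d"
  obtains V :: "(real^'n) set" and h g where "subspace V" "dim V = d"
    "homeomorphism (cball 0 1 \<inter> V) (closure \<sigma>) h g" "h ` (ball 0 1 \<inter> V) = \<sigma>"
  using assms unfolding cell_of_dim_def by blast

lemma cell_of_dim_chart:
  fixes \<sigma> :: "(real^'n) set"
  assumes "cell_of_dim \<sigma> d"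
  obtains V :: "(real^'n) set" and g g' where "subspace V" "dim V = d"
    "homeomorphism (ball 0 1 \<inter> V) \<sigma> g g'"
proof -
  obtain V :: "(real^'n) set" and g g' where V: "subspace V" "dim V = d"
    and g: "homeomorphism (cball 0 1 \<inter> V) (closure \<sigma>) g g'" and \<sigma>: "g ` (ball 0 1 \<inter> V) = \<sigma>"
    using assms by (rule cell_of_dimE)
  have "homeomorphism (ball 0 1 \<inter> V) \<sigma> g g'"
    using \<sigma> closure_subset by (intro homeomorphism_of_subsets[OF g]) auto
  with V show ?thesis
    by (rule that)
qed

lemma cell_of_dim_connected:
  fixes \<sigma> :: "(real^'n) set"
  assumes "cell_of_dim \<sigma> d"
  shows "connected \<sigma>"
proof -
  obtain V :: "(real^'n) set" and g g' where "subspace V" "homeomorphism (ball 0 1 \<inter> V) \<sigma> g g'"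
    using assms by (rule cell_of_dim_chart)
  then show ?thesis
    by (metis connected_continuous_image convex_Int convex_ball convex_connected
        homeomorphism_def subspace_imp_convex)
qed

lemma cell_of_dim_frontier_chart:
  fixes \<rho> :: "(real^'n) set"
  assumes "cell_of_dim \<rho> d" and "open U"
  obtains V :: "(real^'n) set" and S h h' where "subspace V" "dim V = d"
    "openin (top_of_set (sphere 0 1 \<inter> V)) S" "homeomorphism S (U \<inter> (closure \<rho> - \<rho>)) h h'"
proof -
  obtain V :: "(real^'n) set" and h h' where V: "subspace V" "dim V = d"
    and h: "homeomorphism (cball 0 1 \<inter> V) (closure \<rho>) h h'" and \<rho>: "h ` (ball 0 1 \<inter> V) = \<rho>"
    using assms(1) by (rule cell_of_dimE)
  have "inj_on h (cball 0 1 \<inter> V)"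
    using h by (metis homeomorphism_apply1 inj_on_inverseI)
  then have "h ` (cball 0 1 \<inter> V - ball 0 1 \<inter> V) = closure \<rho> - \<rho>"
    using homeomorphism_image1[OF h] \<rho> by (subst inj_on_image_set_diff) auto
  moreover have "cball 0 1 \<inter> V - ball 0 1 \<inter> V = sphere 0 1 \<inter> V"
    by auto
  ultimately have h_sphere: "homeomorphism (sphere 0 1 \<inter> V) (closure \<rho> - \<rho>) h h'"
    by (intro homeomorphism_of_subsets[OF h]) auto
  define S where "S = sphere 0 1 \<inter> V \<inter> h -` U"
  have "openin (top_of_set (sphere 0 1 \<inter> V)) S"
    unfolding S_def using continuous_openin_preimage_gen[OF homeomorphism_cont1[OF h_sphere] assms(2)] .
  moreover have "h ` S = U \<inter> h ` (sphere 0 1 \<inter> V)"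
    unfolding S_def by blast
  then have "h ` S = U \<inter> (closure \<rho> - \<rho>)"
    unfolding homeomorphism_image1[OF h_sphere] .
  then have "homeomorphism S (U \<inter> (closure \<rho> - \<rho>)) h h'"
    using homeomorphism_of_subsets[OF h_sphere _ order_refl] by (metis Int_lower1 S_def)
  ultimately show ?thesis
    using V that by blast
qed

text \<open>If near a frontier point of a \<open>d\<close>-cell \<open>\<rho>\<close> the frontier lies in a \<open>k\<close>-cell \<open>\<sigma>\<close>
  with \<open>k < d\<close>, a patch of the \<open>(d - 1)\<close>-sphere embeds into the \<open>k\<close>-ball of \<open>\<sigma>\<close>: invariance
  of dimension forces \<open>k = d - 1\<close>, and invariance of domain makes the patch open in \<open>\<sigma>\<close>.\<close>

lemma cell_frontier_patch:
  fixes \<rho> \<sigma> :: "(real^'n) set"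
  assumes \<rho>: "cell_of_dim \<rho> d" and \<sigma>: "cell_of_dim \<sigma> k" and "k < d"
    and U: "open U" "q \<in> U" "q \<in> closure \<rho> - \<rho>" "U \<inter> (closure \<rho> - \<rho>) \<subseteq> \<sigma>"
  shows "d = k + 1" and "openin (top_of_set \<sigma>) (U \<inter> (closure \<rho> - \<rho>))"
proof -
  obtain V :: "(real^'n) set" and S h h' where V: "subspace V" "dim V = d"
    and S: "openin (top_of_set (sphere 0 1 \<inter> V)) S"
    and h: "homeomorphism S (U \<inter> (closure \<rho> - \<rho>)) h h'"
    using \<rho> U(1) by (rule cell_of_dim_frontier_chart)
  obtain W :: "(real^'n) set" and g g' where W: "subspace W" "dim W = k"
    and g: "homeomorphism (ball 0 1 \<inter> W) \<sigma> g g'"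
    using \<sigma> by (rule cell_of_dim_chart)
  have g': "homeomorphism (U \<inter> (closure \<rho> - \<rho>)) (g' ` (U \<inter> (closure \<rho> - \<rho>))) g' g"
    using homeomorphism_of_subsets[OF homeomorphism_symD[OF g] U(4) order_refl refl] .
  define f where "f = g' \<circ> h"
  have f_S: "f ` S = g' ` (U \<inter> (closure \<rho> - \<rho>))"
    unfolding f_def by (metis homeomorphism_image1[OF h] image_comp)
  have f: "homeomorphism S (f ` S) f (h' \<circ> g)"
    unfolding f_S unfolding f_def by (rule homeomorphism_compose[OF h g'])
  then have f_cont: "continuous_on S f" and f_inj: "inj_on f S"
    by (auto simp: homeomorphism_def intro: inj_on_inverseI)
  have f_S_ball: "f ` S \<subseteq> ball 0 1 \<inter> W"
    using f_S homeomorphism_image2[OF g] U(4) by auto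
  obtain s where "s \<in> S"
    using U(2,3) homeomorphism_image1[OF h] by blast
  have "dim V \<le> dim W + 1"
    using dim_le_if_sphere_patch_embeds[OF V(1) W(1) S \<open>s \<in> S\<close> f_cont f_inj] f_S_ball by blast
  then show "d = k + 1"
    using V(2) W(2) \<open>k < d\<close> by simp
  have "openin (top_of_set W) (f ` S)"
    using openin_image_sphere_patch[OF V(1) W(1) _ S f_cont f_inj] V(2) W(2) \<open>k < d\<close> f_S_ball by blast
  then have "openin (top_of_set (ball 0 1 \<inter> W)) (f ` S)"
    using f_S_ball by (rule openin_subset_trans) auto
  then have "openin (top_of_set \<sigma>) (g ` f ` S)"
    by (rule homeomorphism_imp_open_map[OF g])
  moreover have "g ` f ` S = U \<inter> (closure \<rho> - \<rho>)"
    using homeomorphism_image2[OF g'] f_S by simp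
  ultimately show "openin (top_of_set \<sigma>) (U \<inter> (closure \<rho> - \<rho>))"
    by simp
qed

locale cw_complex =
  fixes X :: "(real^'n) set" and C :: "(real^'n) set set" and cdim :: "(real^'n) set \<Rightarrow> nat"
  assumes cell_complex: "cell_complex X C cdim"
begin

lemma cell_nonempty: "\<sigma> \<in> C \<Longrightarrow> \<sigma> \<noteq> {}"
  using cell_complex by (simp add: cell_complex_def)

lemma cell_of_dim_cdim: "\<sigma> \<in> C \<Longrightarrow> cell_of_dim \<sigma> (cdim \<sigma>)"
  using cell_complex by (simp add: cell_complex_def)

lemma cells_disjoint: "\<sigma> \<in> C \<Longrightarrow> \<tau> \<in> C \<Longrightarrow> \<sigma> \<noteq> \<tau> \<Longrightarrow> \<sigma> \<inter> \<tau> = {}"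
  using cell_complex by (simp add: cell_complex_def)

lemma Union_cells: "\<Union>C = X"
  using cell_complex by (simp add: cell_complex_def)

lemma frontier_subset_lower_cells: "\<sigma> \<in> C \<Longrightarrow> closure \<sigma> - \<sigma> \<subseteq> \<Union>{\<tau>\<in>C. cdim \<tau> < cdim \<sigma>}"
  using cell_complex by (simp add: cell_complex_def)

lemma finite_cells_meeting_closure: "\<sigma> \<in> C \<Longrightarrow> finite {\<tau>\<in>C. \<tau> \<inter> closure \<sigma> \<noteq> {}}"
  using cell_complex by (simp add: cell_complex_def)

lemma closedin_if_closedin_closures:
  "A \<subseteq> X \<Longrightarrow> (\<And>\<sigma>. \<sigma> \<in> C \<Longrightarrow> closedin (top_of_set (closure \<sigma>)) (A \<inter> closure \<sigma>)) \<Longrightarrow>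
    closedin (top_of_set X) A"
  using cell_complex by (simp add: cell_complex_def)

lemma cell_connected: "\<sigma> \<in> C \<Longrightarrow> connected \<sigma>"
  using cell_of_dim_connected cell_of_dim_cdim by blast

lemma cdim_less_if_meets_closure:
  assumes "\<alpha> \<in> C" "\<beta> \<in> C" "\<alpha> \<noteq> \<beta>" "\<alpha> \<inter> closure \<beta> \<noteq> {}"
  shows "cdim \<alpha> < cdim \<beta>"
proof -
  obtain p where p: "p \<in> \<alpha>" "p \<in> closure \<beta>"
    using assms(4) by blast
  then have "p \<in> closure \<beta> - \<beta>"
    using cells_disjoint[OF assms(1-3)] by blast
  then obtain \<tau> where \<tau>: "\<tau> \<in> C" "cdim \<tau> < cdim \<beta>" "p \<in> \<tau>"
    using frontier_subset_lower_cells[OF assms(2)] by blast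
  then have "\<tau> = \<alpha>"
    using cells_disjoint[OF \<tau>(1) assms(1)] p(1) by blast
  then show ?thesis
    using \<tau>(2) by simp
qed

lemma closedin_if_finite_Int_cells:
  assumes "A \<subseteq> X" and finite: "\<And>\<tau>. \<tau> \<in> C \<Longrightarrow> finite (A \<inter> \<tau>)"
  shows "closedin (top_of_set X) A"
proof (rule closedin_if_closedin_closures[OF assms(1)])
  fix \<beta> assume \<beta>: "\<beta> \<in> C"
  have "A \<inter> closure \<beta> \<subseteq> (\<Union>\<tau>\<in>{\<tau>\<in>C. \<tau> \<inter> closure \<beta> \<noteq> {}}. A \<inter> \<tau>)"
    using assms(1) Union_cells by blast
  moreover have "finite (\<Union>\<tau>\<in>{\<tau>\<in>C. \<tau> \<inter> closure \<beta> \<noteq> {}}. A \<inter> \<tau>)"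
    using finite_cells_meeting_closure[OF \<beta>] finite by (intro finite_UN_I) auto
  ultimately have "finite (A \<inter> closure \<beta>)"
    by (rule finite_subset)
  then show "closedin (top_of_set (closure \<beta>)) (A \<inter> closure \<beta>)"
    by (intro closed_subset finite_imp_closed) auto
qed

text \<open>The case split is on whether \<open>q\<close> is a limit of points of the frontier of \<open>\<rho>\<close> outside
  \<open>\<sigma>\<close>; by closure-finiteness these lie in finitely many cells, one of which then has \<open>q\<close>
  in its closure.\<close>

lemma meets_closure_cases:
  assumes \<sigma>: "\<sigma> \<in> C" and \<rho>: "\<rho> \<in> C" "\<sigma> \<noteq> \<rho>" and q: "q \<in> \<sigma>" "q \<in> closure \<rho>"
  obtains (intermediate) \<tau> where "\<tau> \<in> C" "\<sigma> \<inter> closure \<tau> \<noteq> {}" "\<tau> \<inter> closure \<rho> \<noteq> {}"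
      "cdim \<sigma> < cdim \<tau>" "cdim \<tau> < cdim \<rho>"
    | (facet) U where "cdim \<rho> = cdim \<sigma> + 1" "open U" "q \<in> U" "U \<inter> \<sigma> \<subseteq> closure \<rho>"
proof (cases "q \<in> closure (closure \<rho> - \<rho> - \<sigma>)")
  case True
  define F where "F = {\<tau>\<in>C. \<tau> \<inter> closure \<rho> \<noteq> {}} - {\<sigma>, \<rho>}"
  have "finite F"
    using finite_cells_meeting_closure[OF \<rho>(1)] by (simp add: F_def)
  have "closure \<rho> - \<rho> - \<sigma> \<subseteq> \<Union>F"
    using frontier_subset_lower_cells[OF \<rho>(1)] by (fastforce simp: F_def)
  moreover have "\<Union>F \<subseteq> \<Union>(closure ` F)"
    using closure_subset by blast
  moreover have "closed (\<Union>(closure ` F))"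
    using \<open>finite F\<close> by (intro closed_Union) auto
  ultimately have "closure (closure \<rho> - \<rho> - \<sigma>) \<subseteq> \<Union>(closure ` F)"
    by (meson closure_minimal order_trans)
  then obtain \<tau> where \<tau>: "\<tau> \<in> C" "\<tau> \<noteq> \<sigma>" "\<tau> \<noteq> \<rho>" "\<tau> \<inter> closure \<rho> \<noteq> {}" "q \<in> closure \<tau>"
    using True unfolding F_def by blast
  then have "\<sigma> \<inter> closure \<tau> \<noteq> {}"
    using q(1) by blast
  with \<tau> show ?thesis
    using cdim_less_if_meets_closure \<sigma> \<rho>(1) by (intro intermediate) auto
next
  case False
  define U where "U = - closure (closure \<rho> - \<rho> - \<sigma>)"
  have U: "open U" "q \<in> U" "U \<inter> (closure \<rho> - \<rho>) \<subseteq> \<sigma>"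
    using False closure_subset[of "closure \<rho> - \<rho> - \<sigma>"] by (auto simp: U_def)
  have "q \<in> closure \<rho> - \<rho>"
    using q cells_disjoint[OF \<sigma> \<rho>] by blast
  moreover have "cdim \<sigma> < cdim \<rho>"
    using q by (intro cdim_less_if_meets_closure[OF \<sigma> \<rho>]) blast
  ultimately have "cdim \<rho> = cdim \<sigma> + 1" "openin (top_of_set \<sigma>) (U \<inter> (closure \<rho> - \<rho>))"
    using cell_frontier_patch[OF cell_of_dim_cdim[OF \<rho>(1)] cell_of_dim_cdim[OF \<sigma>] _ U(1,2) _ U(3)]
    by auto
  moreover obtain U' where "open U'" "U \<inter> (closure \<rho> - \<rho>) = \<sigma> \<inter> U'"
    using calculation(2) by (auto simp: openin_open)
  ultimately show ?thesis
    using U(2) \<open>q \<in> closure \<rho> - \<rho>\<close> by (intro facet[of U']) auto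
qed

lemma subset_closure_if_meets_closure:
  "\<sigma> \<in> C \<Longrightarrow> \<rho> \<in> C \<Longrightarrow> \<sigma> \<inter> closure \<rho> \<noteq> {} \<Longrightarrow> \<sigma> \<subseteq> closure \<rho>"
proof (induction "cdim \<rho> - cdim \<sigma>" arbitrary: \<sigma> \<rho> rule: less_induct)
  case less
  show ?case
  proof (cases "\<exists>\<tau>\<in>C. \<sigma> \<inter> closure \<tau> \<noteq> {} \<and> \<tau> \<inter> closure \<rho> \<noteq> {} \<and> cdim \<sigma> < cdim \<tau> \<and> cdim \<tau> < cdim \<rho>")
    case True
    then obtain \<tau> where \<tau>: "\<tau> \<in> C" "\<sigma> \<inter> closure \<tau> \<noteq> {}" "\<tau> \<inter> closure \<rho> \<noteq> {}"
      "cdim \<sigma> < cdim \<tau>" "cdim \<tau> < cdim \<rho>"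
      by blast
    have "\<sigma> \<subseteq> closure \<tau>" "\<tau> \<subseteq> closure \<rho>"
      using less.hyps \<tau> less.prems(1,2) by auto
    then show ?thesis
      using closure_mono[of \<tau> "closure \<rho>"] by auto
  next
    case no_intermediate: False
    show ?thesis
    proof (cases "\<sigma> = \<rho>")
      case False
      have "\<exists>T. openin (top_of_set \<sigma>) T \<and> q \<in> T \<and> T \<subseteq> \<sigma> \<inter> closure \<rho>"
        if q: "q \<in> \<sigma>" "q \<in> closure \<rho>" for q
        using less.prems(1,2) False q
      proof (cases rule: meets_closure_cases)
        case intermediate
        then show ?thesis
          using no_intermediate by blast
      next
        case (facet U)
        then show ?thesis
          using q by (intro exI[of _ "\<sigma> \<inter> U"]) (auto intro: openin_open_Int)
      qed
      then have "openin (top_of_set \<sigma>) (\<sigma> \<inter> closure \<rho>)"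
        by (subst openin_subopen) auto
      moreover have "closedin (top_of_set \<sigma>) (\<sigma> \<inter> closure \<rho>)"
        by (rule closedin_closed_Int) simp
      ultimately have "\<sigma> \<inter> closure \<rho> = \<sigma>"
        using cell_connected[OF less.prems(1)] less.prems(3) unfolding connected_clopen by blast
      then show ?thesis
        by blast
    qed (use closure_subset in auto)
  qed
qed

lemma exists_facet_of_same_value:
  fixes v :: "(real^'n) set \<Rightarrow> 'b::order"
  assumes mono: "\<And>\<alpha> \<beta>. \<alpha> \<in> C \<Longrightarrow> \<beta> \<in> C \<Longrightarrow> \<alpha> \<inter> closure \<beta> \<noteq> {} \<Longrightarrow> v \<alpha> \<le> v \<beta>"
  shows "\<sigma> \<in> C \<Longrightarrow> \<rho> \<in> C \<Longrightarrow> \<sigma> \<noteq> \<rho> \<Longrightarrow> \<sigma> \<inter> closure \<rho> \<noteq> {} \<Longrightarrow> v \<sigma> = v \<rho> \<Longrightarrow>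
    \<exists>\<tau>\<in>C. facet cdim \<tau> \<sigma> \<and> v \<tau> = v \<sigma>"
proof (induction "cdim \<rho> - cdim \<sigma>" arbitrary: \<rho> rule: less_induct)
  case less
  obtain q where q: "q \<in> \<sigma>" "q \<in> closure \<rho>"
    using less.prems(4) by blast
  from less.prems(1-3) q show ?case
  proof (cases rule: meets_closure_cases)
    case (intermediate \<tau>)
    have "v \<sigma> \<le> v \<tau>" "v \<tau> \<le> v \<rho>"
      using mono intermediate less.prems(1,2) by auto
    then have "v \<sigma> = v \<tau>"
      using less.prems(5) by simp
    moreover have "cdim \<tau> - cdim \<sigma> < cdim \<rho> - cdim \<sigma>" "\<sigma> \<noteq> \<tau>"
      using intermediate by auto
    ultimately show ?thesis
      using less.hyps[of \<tau>] less.prems(1) intermediate by auto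
  next
    case facet
    then have "facet cdim \<rho> \<sigma>"
      using subset_closure_if_meets_closure less.prems(1,2,4) by (simp add: facet_def)
    then show ?thesis
      using less.prems(2,5) by auto
  qed
qed


section \<open>Fibres of functions constant on cells\<close>

context
  fixes \<psi> :: "real^'n \<Rightarrow> 'b" and v :: "(real^'n) set \<Rightarrow> 'b"
  assumes \<psi>_cell: "\<And>\<sigma> p. \<sigma> \<in> C \<Longrightarrow> p \<in> \<sigma> \<Longrightarrow> \<psi> p = v \<sigma>"
    and separated: "\<And>\<alpha> \<beta>. \<alpha> \<in> C \<Longrightarrow> \<beta> \<in> C \<Longrightarrow> \<alpha> \<noteq> \<beta> \<Longrightarrow> v \<alpha> = v \<beta> \<Longrightarrow> \<alpha> \<inter> closure \<beta> = {}"
begin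

lemma cell_subset_fibre: "\<sigma> \<in> C \<Longrightarrow> \<sigma> \<subseteq> {p \<in> X. \<psi> p = v \<sigma>}"
  using \<psi>_cell Union_cells by blast

lemma closedin_fibre_cell:
  assumes \<sigma>: "\<sigma> \<in> C"
  shows "closedin (top_of_set {p \<in> X. \<psi> p = v \<sigma>}) \<sigma>"
proof -
  let ?P = "{p \<in> X. \<psi> p = v \<sigma>}"
  have "?P \<inter> closure \<sigma> \<subseteq> \<sigma>"
  proof
    fix x assume x: "x \<in> ?P \<inter> closure \<sigma>"
    then obtain \<tau> where \<tau>: "\<tau> \<in> C" "x \<in> \<tau>"
      using Union_cells by blast
    then have "v \<tau> = v \<sigma>"
      using \<psi>_cell x by auto
    then have "\<tau> = \<sigma>"
      using separated[OF \<tau>(1) \<sigma>] x \<tau>(2) by blast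
    then show "x \<in> \<sigma>"
      using \<tau>(2) by simp
  qed
  then have "\<sigma> = ?P \<inter> closure \<sigma>"
    using cell_subset_fibre[OF \<sigma>] closure_subset by blast
  then show ?thesis
    by (metis closedin_closed_Int closed_closure)
qed

text \<open>A point of \<open>\<sigma>\<close> cannot be a limit of other points of its fibre: such a sequence
  would meet every cell only finitely often (each of those cells has closure disjoint
  from \<open>\<sigma>\<close>), so by the weak topology its range would be closed.\<close>

lemma cell_disjoint_closure_fibre_diff:
  assumes \<sigma>: "\<sigma> \<in> C"
  shows "\<sigma> \<inter> closure ({p \<in> X. \<psi> p = v \<sigma>} - \<sigma>) = {}"
proof (rule ccontr)
  let ?P = "{p \<in> X. \<psi> p = v \<sigma>}"
  assume "\<sigma> \<inter> closure (?P - \<sigma>) \<noteq> {}"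
  then obtain p where p: "p \<in> \<sigma>" "p \<in> closure (?P - \<sigma>)"
    by blast
  then obtain x where x: "\<And>n. x n \<in> ?P - \<sigma>" "x \<longlonglongrightarrow> p"
    unfolding closure_sequential by blast
  have "finite (range x \<inter> \<tau>)" if \<tau>: "\<tau> \<in> C" for \<tau>
  proof (cases "range x \<inter> \<tau> = {}")
    case False
    then obtain n where "x n \<in> \<tau>"
      by blast
    then have "v \<tau> = v \<sigma>" "\<tau> \<noteq> \<sigma>"
      using x(1)[of n] \<psi>_cell[OF \<tau>] by auto
    then have "p \<notin> closure \<tau>"
      using separated[OF \<sigma> \<tau>] p by force
    then have "eventually (\<lambda>n. x n \<notin> closure \<tau>) sequentially"
      using topological_tendstoD[OF x(2), of "- closure \<tau>"] by auto
    then have "finite {n. x n \<in> closure \<tau>}"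
      by (simp add: cofinite_eq_sequentially[symmetric] eventually_cofinite)
    then have "finite (x ` {n. x n \<in> closure \<tau>})"
      by simp
    moreover have "range x \<inter> \<tau> \<subseteq> x ` {n. x n \<in> closure \<tau>}"
      using closure_subset by blast
    ultimately show ?thesis
      by (rule finite_subset[rotated])
  qed simp
  then have "closedin (top_of_set X) (range x)"
    using x(1) by (intro closedin_if_finite_Int_cells) auto
  then obtain T where "closed T" "range x = X \<inter> T"
    by (auto simp: closedin_closed)
  moreover have "p \<in> X"
    using p \<sigma> Union_cells by blast
  ultimately have "p \<in> range x"
    using closed_sequentially[of T x p] x(2) by auto
  then show False
    using x(1) p(1) by auto
qed

lemma openin_fibre_cell:
  assumes \<sigma>: "\<sigma> \<in> C"
  shows "openin (top_of_set {p \<in> X. \<psi> p = v \<sigma>}) \<sigma>"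
proof -
  let ?P = "{p \<in> X. \<psi> p = v \<sigma>}"
  have "closedin (top_of_set ?P) (?P - \<sigma>)"
    using cell_disjoint_closure_fibre_diff[OF \<sigma>]
    by (subst closedin_closed) (auto intro!: exI[of _ "closure (?P - \<sigma>)"] closure_subset[THEN subsetD])
  then show ?thesis
    using cell_subset_fibre[OF \<sigma>] by (simp add: openin_closedin_eq double_diff)
qed

lemma component_of_fibre_in_cells:
  assumes K: "K \<in> components {p \<in> X. \<psi> p = u}"
  shows "K \<in> C"
proof -
  obtain p where p: "p \<in> K"
    using in_components_nonempty[OF K] by blast
  have K_sub: "K \<subseteq> {p \<in> X. \<psi> p = u}"
    using in_components_subset[OF K] .
  then obtain \<sigma> where \<sigma>: "\<sigma> \<in> C" "p \<in> \<sigma>"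
    using p Union_cells by blast
  then have u: "u = v \<sigma>"
    using \<psi>_cell K_sub p by auto
  have "\<sigma> \<subseteq> K"
    using components_maximal[OF K cell_connected[OF \<sigma>(1)]] cell_subset_fibre[OF \<sigma>(1)] u p \<sigma>(2)
    by blast
  then have "openin (top_of_set K) \<sigma>" "closedin (top_of_set K) \<sigma>"
    using openin_fibre_cell[OF \<sigma>(1)] closedin_fibre_cell[OF \<sigma>(1)] K_sub u
    by (auto intro: openin_subset_trans closedin_subset_trans)
  then have "\<sigma> = K"
    using in_components_connected[OF K] \<sigma>(2) unfolding connected_clopen by blast
  then show ?thesis
    using \<sigma>(1) by simp
qed

end

lemma components_of_fibres_in_cells_iff:
  fixes \<psi> :: "real^'n \<Rightarrow> 'b::order" and v :: "(real^'n) set \<Rightarrow> 'b"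
  assumes \<psi>_cell: "\<And>\<sigma> p. \<sigma> \<in> C \<Longrightarrow> p \<in> \<sigma> \<Longrightarrow> \<psi> p = v \<sigma>"
    and mono: "\<And>\<alpha> \<beta>. \<alpha> \<in> C \<Longrightarrow> \<beta> \<in> C \<Longrightarrow> \<alpha> \<inter> closure \<beta> \<noteq> {} \<Longrightarrow> v \<alpha> \<le> v \<beta>"
  shows "(\<forall>u. \<forall>K \<in> components {p \<in> X. \<psi> p = u}. K \<in> C) \<longleftrightarrow>
    (\<forall>\<sigma>\<in>C. \<forall>\<tau>\<in>C. facet cdim \<sigma> \<tau> \<longrightarrow> v \<sigma> \<noteq> v \<tau>)"
proof
  assume components: "\<forall>u. \<forall>K \<in> components {p \<in> X. \<psi> p = u}. K \<in> C"
  show "\<forall>\<sigma>\<in>C. \<forall>\<tau>\<in>C. facet cdim \<sigma> \<tau> \<longrightarrow> v \<sigma> \<noteq> v \<tau>"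
  proof (intro ballI impI notI)
    fix \<sigma> \<tau> assume \<sigma>\<tau>: "\<sigma> \<in> C" "\<tau> \<in> C" "facet cdim \<sigma> \<tau>" "v \<sigma> = v \<tau>"
    have "connected (\<sigma> \<union> \<tau>)"
      using \<sigma>\<tau>(3) closure_subset
      by (intro connected_intermediate_closure[OF cell_connected[OF \<sigma>\<tau>(1)]]) (auto simp: facet_def)
    moreover have "\<sigma> \<union> \<tau> \<subseteq> {p \<in> X. \<psi> p = v \<sigma>}"
      using \<psi>_cell \<sigma>\<tau> Union_cells by auto
    moreover have "{p \<in> X. \<psi> p = v \<sigma>} \<noteq> {}"
      using calculation(2) cell_nonempty[OF \<sigma>\<tau>(1)] by blast
    ultimately obtain K where K: "K \<in> components {p \<in> X. \<psi> p = v \<sigma>}" "\<sigma> \<union> \<tau> \<subseteq> K"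
      by (meson exists_component_superset)
    then have "K \<in> C"
      using components by blast
    then have "K = \<sigma>" "K = \<tau>"
      using cells_disjoint[OF \<open>K \<in> C\<close>] cell_nonempty \<sigma>\<tau>(1,2) K(2) by blast+
    then show False
      using \<sigma>\<tau>(3) by (simp add: facet_def)
  qed
next
  assume no_facet: "\<forall>\<sigma>\<in>C. \<forall>\<tau>\<in>C. facet cdim \<sigma> \<tau> \<longrightarrow> v \<sigma> \<noteq> v \<tau>"
  have separated: "\<alpha> \<inter> closure \<beta> = {}" if "\<alpha> \<in> C" "\<beta> \<in> C" "\<alpha> \<noteq> \<beta>" "v \<alpha> = v \<beta>" for \<alpha> \<beta>
    using exists_facet_of_same_value[OF mono that(1-3) _ that(4)] no_facet that(1) by metis
  then show "\<forall>u. \<forall>K \<in> components {p \<in> X. \<psi> p = u}. K \<in> C"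
    using component_of_fibre_in_cells[of \<psi> v, OF \<psi>_cell separated] by blast
qed

end

section \<open>Minimality of the cellular complex\<close>

lemma zle_iff_less_eq: "zle u v \<longleftrightarrow> u \<le> v"
  by (simp add: zle_def less_eq_vec_def)

lemma nonzero_scalar_single_iff: "nonzero_scalar (Poly_Mapping.single a c) \<longleftrightarrow> c \<noteq> 0 \<and> a = 0"
  unfolding nonzero_scalar_def by (metis lookup_single_eq lookup_single_not_eq)

lemma monexp_diff_eq_0_iff: "v \<le> u \<Longrightarrow> monexp (u - v) = 0 \<longleftrightarrow> u = v"
  by (auto simp: monexp_def vec_eq_iff less_eq_vec_def intro: order_antisym)

lemma stratification_cval_eq:
  assumes "stratification L C \<psi>" "\<sigma> \<in> C" "p \<in> \<sigma>"
  shows "cval \<psi> \<sigma> = \<psi> p"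
proof -
  have "(SOME x. x \<in> \<sigma>) \<in> \<sigma>"
    using assms(3) by (rule someI)
  moreover have "\<forall>p\<in>\<sigma>. \<forall>q\<in>\<sigma>. \<psi> p = \<psi> q"
    using assms(1,2) unfolding stratification_def by blast
  ultimately show ?thesis
    unfolding cval_def using assms(3) by blast
qed

text \<open>The preimage of the up-set of \<open>cval \<psi> \<alpha>\<close> is open and contains \<open>\<alpha>\<close>, so it meets \<open>\<beta>\<close>.\<close>

lemma stratification_cval_mono:
  assumes \<psi>: "stratification L C \<psi>" and cover: "\<Union>C = LR L"
    and \<alpha>\<beta>: "\<alpha> \<in> C" "\<beta> \<in> C" "\<alpha> \<inter> closure \<beta> \<noteq> {}"
  shows "cval \<psi> \<alpha> \<le> cval \<psi> \<beta>"
proof -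
  have "up_closed {u. cval \<psi> \<alpha> \<le> u}"
    unfolding up_closed_def zle_iff_less_eq by (auto intro: order_trans)
  then have "openin (top_of_set (LR L)) {p \<in> LR L. \<psi> p \<in> {u. cval \<psi> \<alpha> \<le> u}}"
    using \<psi> unfolding stratification_def by blast
  then obtain T where T: "open T" "{p \<in> LR L. cval \<psi> \<alpha> \<le> \<psi> p} = LR L \<inter> T"
    by (auto simp: openin_open)
  obtain q where q: "q \<in> \<alpha>" "q \<in> closure \<beta>"
    using \<alpha>\<beta>(3) by blast
  have "cval \<psi> \<alpha> = \<psi> q" "q \<in> LR L"
    using stratification_cval_eq[OF \<psi> \<alpha>\<beta>(1) q(1)] \<alpha>\<beta>(1) q(1) cover by auto
  then have "q \<in> LR L \<inter> T"
    unfolding T(2)[symmetric] by simp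
  then obtain p where p: "p \<in> T" "p \<in> \<beta>"
    using q(2) T(1) open_Int_closure_eq_empty by blast
  have "cval \<psi> \<beta> = \<psi> p" "p \<in> LR L"
    using stratification_cval_eq[OF \<psi> \<alpha>\<beta>(2) p(2)] \<alpha>\<beta>(2) p(2) cover by auto
  moreover have "p \<in> {p \<in> LR L. cval \<psi> \<alpha> \<le> \<psi> p}"
    unfolding T(2) using p(1) calculation(2) by simp
  ultimately show ?thesis
    by simp
qed

lemma (in cw_complex) Fpsi_minimal_iff:
  fixes \<psi> :: "real^'n \<Rightarrow> int^'n"
  assumes \<epsilon>: "incidence_function L C cdim \<epsilon>"
    and mono: "\<And>\<alpha> \<beta>. \<alpha> \<in> C \<Longrightarrow> \<beta> \<in> C \<Longrightarrow> \<alpha> \<inter> closure \<beta> \<noteq> {} \<Longrightarrow> cval \<psi> \<alpha> \<le> cval \<psi> \<beta>"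
  shows "Fpsi_minimal TYPE('k::field) C cdim \<psi> \<epsilon> \<longleftrightarrow>
    (\<forall>\<sigma>\<in>C. \<forall>\<tau>\<in>C. facet cdim \<sigma> \<tau> \<longrightarrow> cval \<psi> \<sigma> \<noteq> cval \<psi> \<tau>)"
proof -
  have "nonzero_scalar (Fpsi_entry \<psi> \<epsilon> \<sigma> \<tau> :: (nat^'n) \<Rightarrow>\<^sub>0 'k) \<longleftrightarrow>
      facet cdim \<sigma> \<tau> \<and> cval \<psi> \<sigma> = cval \<psi> \<tau>" if "\<sigma> \<in> C" "\<tau> \<in> C" for \<sigma> \<tau>
  proof (cases "facet cdim \<sigma> \<tau>")
    case True
    then have "\<epsilon> \<sigma> \<tau> \<in> {1, -1}"
      using \<epsilon> that by (simp add: incidence_function_def)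
    \<comment> \<open>\<open>monexp\<close> truncates negative exponents; only this inequality makes a zero exponent
      mean \<open>cval \<psi> \<sigma> = cval \<psi> \<tau>\<close>\<close>
    moreover have "cval \<psi> \<tau> \<le> cval \<psi> \<sigma>"
      using True that cell_nonempty[of \<tau>] by (intro mono) (auto simp: facet_def)
    ultimately show ?thesis
      using True by (auto simp: Fpsi_entry_def nonzero_scalar_single_iff monexp_diff_eq_0_iff)
  next
    case False
    then have "\<epsilon> \<sigma> \<tau> = 0"
      using \<epsilon> that by (simp add: incidence_function_def)
    then show ?thesis
      using False nonzero_scalar_single_iff[of 0 "0 :: 'k"] by (simp add: Fpsi_entry_def)
  qed
  then show ?thesis
    unfolding Fpsi_minimal_def facet_def by blast
qed

theorem lemma4p7:
  fixes L :: "(int^'n) set"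
    and C :: "(real^'n) set set"
    and cdim :: "(real^'n) set \<Rightarrow> nat"
    and \<psi> :: "real^'n \<Rightarrow> int^'n"
    and \<epsilon> :: "(real^'n) set \<Rightarrow> (real^'n) set \<Rightarrow> int"
  assumes "is_subgroup_Zn L"
    and "cell_complex (LR L) C cdim"
    and "equivariant_cc L C cdim"
    and "stratification L C \<psi>"
    and "incidence_function L C cdim \<epsilon>"
  shows "Fpsi_minimal TYPE('k::field) C cdim \<psi> \<epsilon> \<longleftrightarrow>
         (\<forall>u. \<forall>K \<in> components {p \<in> LR L. \<psi> p = u}. \<exists>\<sigma>\<in>C. K = \<sigma>)"
proof -
  interpret cw_complex "LR L" C cdim
    using assms(2) by (rule cw_complex.intro)
  have \<psi>_cell: "\<And>\<sigma> p. \<sigma> \<in> C \<Longrightarrow> p \<in> \<sigma> \<Longrightarrow> \<psi> p = cval \<psi> \<sigma>"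
    using stratification_cval_eq[OF assms(4)] by simp
  have mono: "\<And>\<alpha> \<beta>. \<alpha> \<in> C \<Longrightarrow> \<beta> \<in> C \<Longrightarrow> \<alpha> \<inter> closure \<beta> \<noteq> {} \<Longrightarrow> cval \<psi> \<alpha> \<le> cval \<psi> \<beta>"
    using stratification_cval_mono[OF assms(4) Union_cells] .
  show ?thesis
    using Fpsi_minimal_iff[OF assms(5) mono, where 'k='k]
      components_of_fibres_in_cells_iff[OF \<psi>_cell mono] by auto
qed

end
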